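(* Let $\pi$ be a permutation of an ordinary set $[k]$ (all letters distinct). Then there exists a constant $e_\pi$ such that for all integers $n\geq1$ and $l\geq n$: (i) for every $\mu:[n]\to\mathbb N\setminus\{0\}$ with $\sum_{i=1}^n\mu(i)=l$, the number $s_\mu(\pi)$ of permutations of the multiset $\{1^{\mu(1)},\ldots,n^{\mu(n)}\}$ avoiding $\pi$ satisfies $s_\mu(\pi)\leq e_\pi^{\,l}$; and (ii) the number $w_{l,n}(\pi)$ of words of length $l$ over the alphabet $[n]$ avoiding $\pi$ satisfies $w_{l,n}(\pi)\leq e_\pi^{\,l}$.
   Context: A permutation of the multiset $\{1^{\mu(1)},\ldots,n^{\mu(n)}\}$ is a sequence of length $\sum_i\mu(i)$ in which each $i\in[n]$ appears exactly $\mu(i)$ times. A word of length $l$ over $[n]$ is any sequence in $[n]^l$. A sequence $\sigma$ avoids $\pi=\pi_1\cdots\pi_k$ if there are no indices $i_1<\cdots<i_k$ with $\sigma_{i_a}<\sigma_{i_b}\iff\pi_a<\pi_b$ and $\sigma_{i_a}=\sigma_{i_b}\iff\pi_a=\pi_b$ for all $a,b$. *)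

theory Defs
  imports Complex_Main
begin

definition contains :: "nat list \<Rightarrow> nat list \<Rightarrow> bool" where
  "contains \<sigma> p \<longleftrightarrow>
     (\<exists>is :: nat list. length is = length p \<and> sorted_wrt (<) is \<and>
        (\<forall>j\<in>set is. j < length \<sigma>) \<and>
        (\<forall>a<length p. \<forall>b<length p.
            (\<sigma> ! (is ! a) < \<sigma> ! (is ! b) \<longleftrightarrow> p ! a < p ! b) \<and>
            (\<sigma> ! (is ! a) = \<sigma> ! (is ! b) \<longleftrightarrow> p ! a = p ! b)))"

definition avoids :: "nat list \<Rightarrow> nat list \<Rightarrow> bool" where
  "avoids \<sigma> p \<longleftrightarrow> \<not> contains \<sigma> p"

definition multiset_perms :: "nat \<Rightarrow> (nat \<Rightarrow> nat) \<Rightarrow> nat list set" where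
  "multiset_perms n \<mu> = {\<sigma>. set \<sigma> \<subseteq> {1..n} \<and> (\<forall>i\<in>{1..n}. count_list \<sigma> i = \<mu> i)}"

definition s_count :: "nat \<Rightarrow> (nat \<Rightarrow> nat) \<Rightarrow> nat list \<Rightarrow> nat" where
  "s_count n \<mu> p = card {\<sigma> \<in> multiset_perms n \<mu>. avoids \<sigma> p}"

definition w_count :: "nat \<Rightarrow> nat \<Rightarrow> nat list \<Rightarrow> nat" where
  "w_count l n p = card {\<sigma>. length \<sigma> = l \<and> set \<sigma> \<subseteq> {1..n} \<and> avoids \<sigma> p}"

end

theory Submission
  imports Defs "HOL-Combinatorics.Permutations"
begin

text \<open>A word is encoded by its graph, a 0-1 matrix in which the occurrences of \<open>\<pi>\<close> are exactly the
  occurrences of the permutation matrix of \<open>\<pi>\<close>. By the Marcus--Tardos argument such a matrix of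
  size \<open>N\<close> has \<open>O(N)\<close> entries: after contracting it into \<open>q \<times> q\<close> blocks, each block row contains
  fewer than \<open>(k - 1) \<cdot> (q choose k)\<close> blocks meeting \<open>k\<close> distinct rows (otherwise \<open>k\<close> of them meet the
  same \<open>k\<close> rows and the pattern appears), symmetrically for columns, and every other block has at
  most \<open>(k - 1)\<^sup>2\<close> entries. Klazar's argument turns this into an exponential bound on the number of
  avoiding matrices, because an avoiding matrix of size \<open>q N\<close> is a subset of the \<open>O(N)\<close> cells of its
  contraction, which again avoids the pattern. Finally, permutations of a multiset are words.\<close>

lemma exists_strict_mono_on_into:
  fixes A :: "'a::linorder set"
  assumes "finite A" "k \<le> card A"
  shows "\<exists>f. strict_mono_on {..<k} f \<and> (\<forall>i<k. f i \<in> A)"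
proof -
  let ?xs = "sorted_list_of_set A"
  have sorted: "sorted_wrt (<) ?xs" and len: "length ?xs = card A"
    by (simp_all add: strict_sorted_list_of_set)
  have "strict_mono_on {..<k} (\<lambda>i. ?xs ! i)"
  proof (rule strict_mono_onI)
    fix i j :: nat assume "i \<in> {..<k}" "j \<in> {..<k}" "i < j"
    then show "?xs ! i < ?xs ! j"
      using sorted_wrt_nth_less[OF sorted, of i j] len assms(2) by simp
  qed
  moreover have "?xs ! i \<in> A" if "i < k" for i
    using nth_mem[of i ?xs] that len assms by simp
  ultimately show ?thesis by blast
qed

lemma exists_power_between:
  fixes q N :: nat
  assumes "2 \<le> q" "1 \<le> N"
  shows "\<exists>m. N \<le> q ^ m \<and> q ^ m \<le> q * N"
proof -
  have "N < 2 ^ N" by (rule less_exp)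
  also have "(2::nat) ^ N \<le> q ^ N" using assms(1) by (rule power_mono) simp
  finally have ex: "\<exists>m. N \<le> q ^ m" by (intro exI[of _ N]) simp
  define m where "m = (LEAST m. N \<le> q ^ m)"
  have "N \<le> q ^ m" unfolding m_def by (rule LeastI_ex[OF ex])
  moreover have "q ^ m \<le> q * N"
  proof (cases m)
    case (Suc m')
    then have "\<not> N \<le> q ^ m'" using not_less_Least[of m' "\<lambda>m. N \<le> q ^ m"] unfolding m_def by simp
    then show ?thesis using Suc by simp
  qed (use assms in simp)
  ultimately show ?thesis by blast
qed

lemma div_eq_iff_mem_interval:
  fixes x q a :: nat
  assumes "0 < q"
  shows "x div q = a \<longleftrightarrow> x \<in> {a * q..<a * q + q}"
proof -
  have "x div q = a \<longleftrightarrow> a \<le> x div q \<and> x div q < Suc a" by linarith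
  also have "\<dots> \<longleftrightarrow> a * q \<le> x \<and> x < Suc a * q"
    using less_eq_div_iff_mult_less_eq[OF assms] div_less_iff_less_mult[OF assms] by simp
  finally show ?thesis by (simp add: add.commute)
qed

lemma div_less_div_imp_less: "(a::nat) div q < b div q \<Longrightarrow> a < b"
  by (metis div_le_mono leD leI)

lemma card_le_card_fst_mult_card_snd:
  assumes "finite A"
  shows "card A \<le> card (fst ` A) * card (snd ` A)"
proof -
  have "A \<subseteq> fst ` A \<times> snd ` A" by force
  then have "card A \<le> card (fst ` A \<times> snd ` A)" using assms by (intro card_mono) auto
  then show ?thesis by (simp add: card_cartesian_product)
qed

text \<open>\<open>S\<close> is the set of positions of the ones of a 0-1 matrix, the first coordinate being the row.\<close>

definition contains_pattern :: "(nat \<Rightarrow> nat) \<Rightarrow> nat \<Rightarrow> (nat \<times> nat) set \<Rightarrow> bool" where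
  "contains_pattern p k S \<longleftrightarrow>
     (\<exists>x y. strict_mono_on {..<k} x \<and> strict_mono_on {..<k} y \<and> (\<forall>i<k. (x i, y (p i)) \<in> S))"

lemma contains_pattern_transpose:
  assumes p: "p permutes {..<k}" and "contains_pattern (inv p) k (prod.swap ` S)"
  shows "contains_pattern p k S"
proof -
  obtain x y where x: "strict_mono_on {..<k} x" and y: "strict_mono_on {..<k} y"
    and xy: "\<forall>i<k. (x i, y (inv p i)) \<in> prod.swap ` S"
    using assms(2) unfolding contains_pattern_def by blast
  have "(y i, x (p i)) \<in> S" if "i < k" for i
  proof -
    have "p i < k" using that permutes_in_image[OF p] by simp
    then have "(x (p i), y i) \<in> prod.swap ` S" using xy permutes_inverses(2)[OF p] by metis
    then show ?thesis by auto
  qed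
  then show ?thesis unfolding contains_pattern_def using x y by blast
qed

definition block_index :: "nat \<Rightarrow> nat \<times> nat \<Rightarrow> nat \<times> nat" where
  "block_index q u = (fst u div q, snd u div q)"

definition contract :: "nat \<Rightarrow> (nat \<times> nat) set \<Rightarrow> (nat \<times> nat) set" where
  "contract q S = block_index q ` S"

definition block :: "nat \<Rightarrow> (nat \<times> nat) set \<Rightarrow> nat \<times> nat \<Rightarrow> (nat \<times> nat) set" where
  "block q S b = {u \<in> S. block_index q u = b}"

definition cell :: "nat \<Rightarrow> nat \<times> nat \<Rightarrow> (nat \<times> nat) set" where
  "cell q b = {fst b * q..<fst b * q + q} \<times> {snd b * q..<snd b * q + q}"

lemma block_index_eq_iff_mem_cell:
  assumes "0 < q"
  shows "block_index q u = b \<longleftrightarrow> u \<in> cell q b"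
  using div_eq_iff_mem_interval[OF assms]
  by (simp add: block_index_def cell_def prod_eq_iff mem_Times_iff)

lemma finite_cell: "finite (cell q b)"
  by (simp add: cell_def)

lemma card_cell: "card (cell q b) = q ^ 2"
  by (simp add: cell_def card_cartesian_product power2_eq_square)

lemma block_subset_cell: "0 < q \<Longrightarrow> block q S b \<subseteq> cell q b"
  by (auto simp: block_def block_index_eq_iff_mem_cell)

lemma finite_block: "finite S \<Longrightarrow> finite (block q S b)"
  by (simp add: block_def)

lemma card_block_le: "0 < q \<Longrightarrow> card (block q S b) \<le> q ^ 2"
  using card_mono[OF finite_cell block_subset_cell] card_cell by metis

lemma contract_subset_square:
  assumes "0 < q" "S \<subseteq> {..<q * N} \<times> {..<q * N}"
  shows "contract q S \<subseteq> {..<N} \<times> {..<N}"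
  using assms by (auto simp: contract_def block_index_def div_less_iff_less_mult mult.commute)

lemma contains_pattern_contract:
  assumes p: "p permutes {..<k}" and "contains_pattern p k (contract q S)"
  shows "contains_pattern p k S"
proof -
  obtain x y where x: "strict_mono_on {..<k} x" and y: "strict_mono_on {..<k} y"
    and xy: "\<forall>i<k. (x i, y (p i)) \<in> contract q S"
    using assms(2) unfolding contains_pattern_def by blast
  have "\<forall>i<k. \<exists>u\<in>S. block_index q u = (x i, y (p i))"
    using xy unfolding contract_def by force
  then obtain f where f: "\<forall>i<k. f i \<in> S \<and> block_index q (f i) = (x i, y (p i))"
    by metis
  have fst_f: "fst (f i) div q = x i" and snd_f: "snd (f i) div q = y (p i)" if "i < k" for i
    using f that by (auto simp: block_index_def)
  \<comment> \<open>the point chosen for entry \<open>i\<close> of the pattern supplies the column for index \<open>p i\<close>\<close>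
  define y' where "y' j = snd (f (inv p j))" for j
  have "strict_mono_on {..<k} (\<lambda>i. fst (f i))"
  proof (rule strict_mono_onI)
    fix i j :: nat assume ij: "i \<in> {..<k}" "j \<in> {..<k}" "i < j"
    then have "fst (f i) div q < fst (f j) div q" using strict_mono_onD[OF x ij] fst_f by simp
    then show "fst (f i) < fst (f j)" by (rule div_less_div_imp_less)
  qed
  moreover have "strict_mono_on {..<k} y'"
  proof (rule strict_mono_onI)
    fix i j :: nat assume ij: "i \<in> {..<k}" "j \<in> {..<k}" "i < j"
    have "inv p i < k" "inv p j < k"
      using ij permutes_in_image[OF permutes_inv[OF p]] by auto
    then have "snd (f (inv p i)) div q < snd (f (inv p j)) div q"
      using snd_f strict_mono_onD[OF y ij] permutes_inverses(1)[OF p] by simp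
    then show "y' i < y' j" unfolding y'_def by (rule div_less_div_imp_less)
  qed
  moreover have "(fst (f i), y' (p i)) \<in> S" if "i < k" for i
    using f that permutes_inverses(2)[OF p] unfolding y'_def by simp
  ultimately show ?thesis unfolding contains_pattern_def by blast
qed


definition tall_blocks :: "nat \<Rightarrow> nat \<Rightarrow> (nat \<times> nat) set \<Rightarrow> (nat \<times> nat) set" where
  "tall_blocks k q S = {b \<in> contract q S. k \<le> card (fst ` block q S b)}"

definition wide_blocks :: "nat \<Rightarrow> nat \<Rightarrow> (nat \<times> nat) set \<Rightarrow> (nat \<times> nat) set" where
  "wide_blocks k q S = {b \<in> contract q S. k \<le> card (snd ` block q S b)}"

lemma contains_pattern_if_rows_shared:
  assumes p: "p permutes {..<k}" and X: "finite X" "card X = k"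
    and Y: "finite Y" "k \<le> card Y" and rows: "\<forall>c\<in>Y. X \<subseteq> fst ` block q S (a, c)"
  shows "contains_pattern p k S"
proof -
  obtain x where x: "strict_mono_on {..<k} x" "\<forall>i<k. x i \<in> X"
    using exists_strict_mono_on_into[OF X(1)] X(2) by auto
  obtain c where c: "strict_mono_on {..<k} c" "\<forall>j<k. c j \<in> Y"
    using exists_strict_mono_on_into[OF Y] by blast
  have "\<exists>u\<in>block q S (a, c j). fst u = x (inv p j)" if "j < k" for j
  proof -
    have "inv p j < k" using that permutes_in_image[OF permutes_inv[OF p]] by simp
    then have "x (inv p j) \<in> fst ` block q S (a, c j)" using x(2) c(2) rows that by blast
    then show ?thesis by force
  qed
  then obtain g where g: "\<forall>j<k. g j \<in> block q S (a, c j) \<and> fst (g j) = x (inv p j)" by metis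
  then have snd_g: "snd (g j) div q = c j" if "j < k" for j
    using that by (auto simp: block_def block_index_def)
  have "strict_mono_on {..<k} (\<lambda>j. snd (g j))"
  proof (rule strict_mono_onI)
    fix i j :: nat assume ij: "i \<in> {..<k}" "j \<in> {..<k}" "i < j"
    then have "snd (g i) div q < snd (g j) div q" using strict_mono_onD[OF c(1) ij] snd_g by simp
    then show "snd (g i) < snd (g j)" by (rule div_less_div_imp_less)
  qed
  moreover have "(x i, snd (g (p i))) \<in> S" if "i < k" for i
  proof -
    have "p i < k" using that permutes_in_image[OF p] by simp
    then have "g (p i) \<in> S" "fst (g (p i)) = x i"
      using g permutes_inverses(2)[OF p] by (auto simp: block_def)
    then show ?thesis by (metis prod.collapse)
  qed
  ultimately show ?thesis unfolding contains_pattern_def using x(1) by blast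
qed

lemma card_tall_blocks_in_block_row:
  assumes p: "p permutes {..<k}" and avoid: "\<not> contains_pattern p k S" and S: "finite S"
    and q: "0 < q"
  shows "card {b \<in> tall_blocks k q S. fst b = a} \<le> (k - 1) * (q choose k)"
proof -
  define W where "W = {b \<in> tall_blocks k q S. fst b = a}"
  have W: "finite W" using S by (simp add: W_def tall_blocks_def contract_def)
  have "\<forall>b\<in>W. \<exists>X. X \<subseteq> fst ` block q S b \<and> card X = k \<and> finite X"
  proof
    fix b assume "b \<in> W"
    then have "k \<le> card (fst ` block q S b)" by (simp add: W_def tall_blocks_def)
    then obtain X where "X \<subseteq> fst ` block q S b" "card X = k" "finite X"
      by (rule obtain_subset_with_card_n)
    then show "\<exists>X. X \<subseteq> fst ` block q S b \<and> card X = k \<and> finite X" by blast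
  qed
  then obtain R where R: "\<forall>b\<in>W. R b \<subseteq> fst ` block q S b \<and> card (R b) = k \<and> finite (R b)"
    by (rule bchoice[THEN exE])
  define D where "D = {X. X \<subseteq> {a * q..<a * q + q} \<and> card X = k}"
  have "fst ` block q S b \<subseteq> {a * q..<a * q + q}" if "b \<in> W" for b
  proof -
    have "fst ` block q S b \<subseteq> fst ` cell q b" by (rule image_mono[OF block_subset_cell[OF q]])
    also have "\<dots> \<subseteq> {a * q..<a * q + q}" using that by (auto simp: cell_def W_def)
    finally show ?thesis .
  qed
  then have "R ` W \<subseteq> D" unfolding D_def using R by blast
  moreover have "finite D" unfolding D_def by (rule finite_subset[of _ "Pow {a * q..<a * q + q}"]) auto
  ultimately have "card (R ` W) \<le> card D" by (rule card_mono[rotated])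
  also have "card D = q choose k"
    unfolding D_def using n_subsets[of "{a * q..<a * q + q}" k] by simp
  finally have card_RW: "card (R ` W) \<le> q choose k" .
  \<comment> \<open>pigeonhole: \<open>k\<close> tall blocks of one block row with the same \<open>k\<close> chosen rows give the pattern\<close>
  have fibre: "card {b \<in> W. R b = X} \<le> k - 1" if "X \<in> R ` W" for X
  proof (rule ccontr)
    define F where "F = {b \<in> W. R b = X}"
    assume "\<not> card {b \<in> W. R b = X} \<le> k - 1"
    then have "k \<le> card F" unfolding F_def by linarith
    also have "card F = card (snd ` F)"
    proof (rule card_image[symmetric], rule inj_onI)
      fix b b' assume bb': "b \<in> F" "b' \<in> F" "snd b = snd b'"
      then have "fst b = a" "fst b' = a" by (simp_all add: F_def W_def)
      with bb'(3) show "b = b'" by (simp add: prod_eq_iff)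
    qed
    finally have card_F: "k \<le> card (snd ` F)" .
    have rows_F: "\<forall>c\<in>snd ` F. X \<subseteq> fst ` block q S (a, c)"
    proof
      fix c assume "c \<in> snd ` F"
      then obtain b where b: "b \<in> F" "c = snd b" by blast
      then have "fst b = a" by (simp add: F_def W_def)
      with b(2) have "b = (a, c)" by (simp add: prod_eq_iff)
      moreover have "b \<in> W" "R b = X" using b(1) by (simp_all add: F_def)
      ultimately show "X \<subseteq> fst ` block q S (a, c)" using R by blast
    qed
    have fin_F: "finite (snd ` F)" using W by (simp add: F_def)
    obtain b where "b \<in> W" "X = R b" using \<open>X \<in> R ` W\<close> by blast
    then have fin_X: "finite X" and card_X: "card X = k" using R by auto
    have "contains_pattern p k S"
      by (rule contains_pattern_if_rows_shared[OF p fin_X card_X fin_F card_F rows_F])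
    then show False using avoid by blast
  qed
  have "card W = card (\<Union>X\<in>R ` W. {b \<in> W. R b = X})" by (rule arg_cong[where f = card]) blast
  also have "\<dots> \<le> (\<Sum>X\<in>R ` W. card {b \<in> W. R b = X})" by (rule card_UN_le) (simp add: W)
  also have "\<dots> \<le> (\<Sum>X\<in>R ` W. k - 1)" by (rule sum_mono) (rule fibre)
  also have "\<dots> = card (R ` W) * (k - 1)" by simp
  also have "\<dots> \<le> (k - 1) * (q choose k)" using card_RW by (simp add: mult.commute)
  finally show ?thesis unfolding W_def .
qed


lemma card_tall_blocks:
  assumes p: "p permutes {..<k}" and avoid: "\<not> contains_pattern p k S" and q: "0 < q"
    and S: "S \<subseteq> {..<q * N} \<times> {..<q * N}"
  shows "card (tall_blocks k q S) \<le> N * ((k - 1) * (q choose k))"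
proof -
  have fin: "finite S" by (rule finite_subset[OF S]) simp
  have "tall_blocks k q S \<subseteq> (\<Union>a<N. {b \<in> tall_blocks k q S. fst b = a})"
    using contract_subset_square[OF q S] by (auto simp: tall_blocks_def)
  then have "card (tall_blocks k q S) \<le> card (\<Union>a<N. {b \<in> tall_blocks k q S. fst b = a})"
    by (rule card_mono[rotated]) (simp add: tall_blocks_def contract_def fin)
  also have "\<dots> \<le> (\<Sum>a<N. card {b \<in> tall_blocks k q S. fst b = a})"
    by (rule card_UN_le) simp
  also have "\<dots> \<le> (\<Sum>a<N. (k - 1) * (q choose k))"
    by (rule sum_mono) (rule card_tall_blocks_in_block_row[OF p avoid fin q])
  finally show ?thesis by simp
qed

lemma tall_blocks_transpose:
  "tall_blocks k q (prod.swap ` S) = prod.swap ` wide_blocks k q S"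
proof -
  have block: "block q (prod.swap ` S) b = prod.swap ` block q S (prod.swap b)" for b
    by (force simp: block_def block_index_def image_iff prod_eq_iff)
  have contract: "contract q (prod.swap ` S) = prod.swap ` contract q S"
    by (force simp: contract_def block_index_def image_iff)
  have "fst ` block q (prod.swap ` S) b = snd ` block q S (prod.swap b)" for b
    unfolding block image_image by simp
  then show ?thesis
    unfolding tall_blocks_def wide_blocks_def contract by (auto simp: image_iff)
qed

lemma card_wide_blocks:
  assumes p: "p permutes {..<k}" and avoid: "\<not> contains_pattern p k S" and q: "0 < q"
    and S: "S \<subseteq> {..<q * N} \<times> {..<q * N}"
  shows "card (wide_blocks k q S) \<le> N * ((k - 1) * (q choose k))"
proof -
  have "\<not> contains_pattern (inv p) k (prod.swap ` S)"
    using contains_pattern_transpose[OF p] avoid by blast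
  moreover have "prod.swap ` S \<subseteq> {..<q * N} \<times> {..<q * N}" using S by auto
  ultimately have "card (tall_blocks k q (prod.swap ` S)) \<le> N * ((k - 1) * (q choose k))"
    using card_tall_blocks[OF permutes_inv[OF p] _ q] by blast
  then show ?thesis by (simp add: tall_blocks_transpose card_image)
qed

lemma card_le_sum_card_block:
  assumes "finite S"
  shows "card S \<le> (\<Sum>b\<in>contract q S. card (block q S b))"
proof -
  have "S = (\<Union>b\<in>contract q S. block q S b)" by (auto simp: contract_def block_def)
  then show ?thesis using card_UN_le[of "contract q S" "block q S"] assms
    by (metis contract_def finite_imageI)
qed

lemma card_block_le_if_not_tall_wide:
  assumes "finite S" "b \<in> contract q S" "b \<notin> tall_blocks k q S" "b \<notin> wide_blocks k q S"
  shows "card (block q S b) \<le> (k - 1) ^ 2"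
proof -
  have "card (fst ` block q S b) \<le> k - 1" "card (snd ` block q S b) \<le> k - 1"
    using assms(2-4) by (auto simp: tall_blocks_def wide_blocks_def)
  then have "card (block q S b) \<le> (k - 1) * (k - 1)"
    using card_le_card_fst_mult_card_snd[OF finite_block[OF assms(1)], of q b] mult_le_mono order_trans
    by blast
  then show ?thesis by (simp add: power2_eq_square)
qed

lemma card_pattern_avoiding_le_power:
  assumes p: "p permutes {..<k}" and q: "0 < q" and c: "1 \<le> c"
    and hc: "(k - 1) ^ 2 * c + 2 * q ^ 2 * ((k - 1) * (q choose k)) \<le> c * q"
    and "S \<subseteq> {..<q ^ m} \<times> {..<q ^ m}" "\<not> contains_pattern p k S"
  shows "card S \<le> c * q ^ m"
  using assms(5,6)
proof (induction m arbitrary: S)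
  case 0
  then have "S \<subseteq> {(0, 0)}" by auto
  then have "card S \<le> 1" using card_mono[of "{(0, 0)}" S] by simp
  then show ?case using c by simp
next
  case (Suc m S)
  define N where "N = q ^ m"
  define X where "X = (k - 1) * (q choose k)"
  define B where "B = contract q S"
  define T where "T = tall_blocks k q S"
  define W where "W = wide_blocks k q S"
  have S: "S \<subseteq> {..<q * N} \<times> {..<q * N}" using Suc.prems(1) by (simp add: N_def)
  have fin: "finite S" by (rule finite_subset[OF S]) simp
  have finB: "finite B" using fin by (simp add: B_def contract_def)
  have card_B: "card B \<le> c * N"
    using Suc.IH[OF contract_subset_square[OF q S[unfolded N_def]]]
      contains_pattern_contract[OF p] Suc.prems(2)
    by (auto simp: B_def N_def)
  have card_T: "card T \<le> N * X" unfolding T_def X_def by (rule card_tall_blocks[OF p Suc.prems(2) q S])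
  have card_W: "card W \<le> N * X" unfolding W_def X_def by (rule card_wide_blocks[OF p Suc.prems(2) q S])
  have TW: "T \<subseteq> B" "W \<subseteq> B" by (auto simp: T_def W_def B_def tall_blocks_def wide_blocks_def)
  have "card (block q S b) \<le> (if b \<in> T then q ^ 2 else 0) + (if b \<in> W then q ^ 2 else 0) + (k - 1) ^ 2"
    if "b \<in> B" for b
    using that card_block_le[OF q, of S b] card_block_le_if_not_tall_wide[OF fin, of b q k]
    by (auto simp: B_def T_def W_def)
  then have "(\<Sum>b\<in>B. card (block q S b))
      \<le> (\<Sum>b\<in>B. (if b \<in> T then q ^ 2 else 0) + (if b \<in> W then q ^ 2 else 0) + (k - 1) ^ 2)"
    by (rule sum_mono)
  also have "\<dots> = q ^ 2 * card T + q ^ 2 * card W + (k - 1) ^ 2 * card B"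
    using TW finB by (simp add: sum.distrib sum.If_cases Int_absorb1 mult.commute)
  also have "\<dots> \<le> q ^ 2 * (N * X) + q ^ 2 * (N * X) + (k - 1) ^ 2 * (c * N)"
    using card_T card_W card_B by (intro add_le_mono mult_le_mono2)
  also have "\<dots> = N * ((k - 1) ^ 2 * c + 2 * q ^ 2 * X)" by (simp add: algebra_simps)
  also have "\<dots> \<le> N * (c * q)" using hc unfolding X_def by simp
  finally show ?case
    using card_le_sum_card_block[OF fin, of q] by (simp add: B_def N_def algebra_simps)
qed

theorem pattern_avoiding_linear_bound:
  assumes p: "p permutes {..<k}"
  shows "\<exists>c. \<forall>N S. S \<subseteq> {..<N} \<times> {..<N} \<longrightarrow> \<not> contains_pattern p k S \<longrightarrow> card S \<le> c * N"
proof -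
  define q :: nat where "q = k ^ 2 + 2"
  define c :: nat where "c = 2 * q ^ 2 * ((k - 1) * (q choose k)) + 1"
  have q: "2 \<le> q" unfolding q_def by simp
  have c: "1 \<le> c" unfolding c_def by simp
  have hc: "(k - 1) ^ 2 * c + 2 * q ^ 2 * ((k - 1) * (q choose k)) \<le> c * q"
  proof -
    have "(k - 1) ^ 2 \<le> k ^ 2" by (rule power_mono) simp_all
    then have "(k - 1) ^ 2 + 1 \<le> q" unfolding q_def by linarith
    then have "((k - 1) ^ 2 + 1) * c \<le> q * c" by (rule mult_le_mono1)
    then have "(k - 1) ^ 2 * c + c \<le> c * q" by (metis add_mult_distrib mult.commute mult_1_left)
    moreover have "2 * q ^ 2 * ((k - 1) * (q choose k)) < c" unfolding c_def by simp
    ultimately show ?thesis by linarith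
  qed
  have "card S \<le> (c * q) * N" if S: "S \<subseteq> {..<N} \<times> {..<N}" and avoid: "\<not> contains_pattern p k S"
    for N S
  proof (cases "N = 0")
    case False
    then have "1 \<le> N" by simp
    then obtain m where m: "N \<le> q ^ m" "q ^ m \<le> q * N"
      using exists_power_between[OF q] by blast
    have "S \<subseteq> {..<q ^ m} \<times> {..<q ^ m}" using S m(1) by auto
    then have "card S \<le> c * q ^ m"
      using card_pattern_avoiding_le_power[OF p _ c hc _ avoid] q by simp
    also have "\<dots> \<le> (c * q) * N" using m(2) by (simp add: mult.assoc)
    finally show ?thesis .
  qed (use S in simp)
  then show ?thesis by blast
qed

definition avoiders :: "(nat \<Rightarrow> nat) \<Rightarrow> nat \<Rightarrow> nat \<Rightarrow> (nat \<times> nat) set set" where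
  "avoiders p k N = {S. S \<subseteq> {..<N} \<times> {..<N} \<and> \<not> contains_pattern p k S}"

lemma finite_avoiders: "finite (avoiders p k N)"
  unfolding avoiders_def by (rule finite_subset[of _ "Pow ({..<N} \<times> {..<N})"]) auto

lemma finite_mem_avoiders: "S \<in> avoiders p k N \<Longrightarrow> finite S"
  unfolding avoiders_def by (auto intro: finite_subset)

lemma avoiders_mono: "N \<le> M \<Longrightarrow> avoiders p k N \<subseteq> avoiders p k M"
  unfolding avoiders_def by auto

lemma card_avoiders_mult_le:
  assumes p: "p permutes {..<k}" and q: "0 < q"
    and linear: "\<forall>S\<in>avoiders p k N. card S \<le> c * N"
  shows "card (avoiders p k (q * N)) \<le> card (avoiders p k N) * 2 ^ (q ^ 2 * (c * N))"
proof -
  have "avoiders p k (q * N) \<subseteq> (\<Union>B\<in>avoiders p k N. Pow (\<Union>b\<in>B. cell q b))"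
  proof
    fix S assume S: "S \<in> avoiders p k (q * N)"
    then have "contract q S \<in> avoiders p k N"
      using contract_subset_square[OF q] contains_pattern_contract[OF p] by (auto simp: avoiders_def)
    moreover have "S \<subseteq> (\<Union>b\<in>contract q S. cell q b)"
    proof
      fix u assume "u \<in> S"
      then show "u \<in> (\<Union>b\<in>contract q S. cell q b)"
        using block_index_eq_iff_mem_cell[OF q, of u "block_index q u"] by (auto simp: contract_def)
    qed
    ultimately show "S \<in> (\<Union>B\<in>avoiders p k N. Pow (\<Union>b\<in>B. cell q b))" by blast
  qed
  then have "card (avoiders p k (q * N)) \<le> card (\<Union>B\<in>avoiders p k N. Pow (\<Union>b\<in>B. cell q b))"
    by (rule card_mono[rotated]) (auto simp: finite_avoiders finite_cell dest: finite_mem_avoiders)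
  also have "\<dots> \<le> (\<Sum>B\<in>avoiders p k N. card (Pow (\<Union>b\<in>B. cell q b)))"
    by (rule card_UN_le[OF finite_avoiders])
  also have "\<dots> \<le> (\<Sum>B\<in>avoiders p k N. 2 ^ (q ^ 2 * (c * N)))"
  proof (rule sum_mono)
    fix B assume B: "B \<in> avoiders p k N"
    then have finB: "finite B" by (rule finite_mem_avoiders)
    have "card (\<Union>b\<in>B. cell q b) \<le> (\<Sum>b\<in>B. card (cell q b))" by (rule card_UN_le[OF finB])
    also have "\<dots> = card B * q ^ 2" by (simp add: card_cell)
    also have "\<dots> \<le> q ^ 2 * (c * N)" using linear B by (simp add: mult.commute)
    finally show "card (Pow (\<Union>b\<in>B. cell q b)) \<le> 2 ^ (q ^ 2 * (c * N))"
      using finB by (simp add: card_Pow finite_cell power_increasing)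
  qed
  also have "\<dots> = card (avoiders p k N) * 2 ^ (q ^ 2 * (c * N))" by simp
  finally show ?thesis .
qed

lemma card_avoiders_exponential:
  assumes p: "p permutes {..<k}"
  shows "\<exists>E \<ge> 1. \<forall>N. card (avoiders p k N) \<le> E ^ N"
proof -
  obtain c where linear: "\<forall>N. \<forall>S\<in>avoiders p k N. card S \<le> c * N"
    using pattern_avoiding_linear_bound[OF p] unfolding avoiders_def by blast
  define D :: nat where "D = 2 ^ (4 * c + 1)"
  have D: "1 \<le> D" unfolding D_def by simp
  have dyadic: "card (avoiders p k (2 ^ m)) \<le> D ^ 2 ^ m" for m
  proof (induction m)
    case 0
    have "avoiders p k 1 \<subseteq> Pow {(0, 0)}" unfolding avoiders_def by auto
    then have "card (avoiders p k 1) \<le> 2" using card_mono[of "Pow {(0::nat, 0::nat)}"] by (simp add: card_Pow)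
    also have "2 \<le> D" unfolding D_def using one_le_power[of 2 "4 * c"] by simp
    finally show ?case by simp
  next
    case (Suc m)
    have "card (avoiders p k (2 ^ Suc m)) \<le> card (avoiders p k (2 ^ m)) * 2 ^ (2 ^ 2 * (c * 2 ^ m))"
      using card_avoiders_mult_le[OF p, of 2 "2 ^ m" c] linear by simp
    also have "\<dots> \<le> D ^ 2 ^ m * D ^ 2 ^ m"
    proof (rule mult_le_mono[OF Suc.IH])
      have "(2::nat) ^ (2 ^ 2 * (c * 2 ^ m)) \<le> 2 ^ ((4 * c + 1) * 2 ^ m)"
        by (rule power_increasing) simp_all
      then show "(2::nat) ^ (2 ^ 2 * (c * 2 ^ m)) \<le> D ^ 2 ^ m" by (simp add: D_def power_mult)
    qed
    also have "\<dots> = D ^ 2 ^ Suc m" by (simp add: power_add[symmetric] mult_2)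
    finally show ?case .
  qed
  have "card (avoiders p k N) \<le> (D ^ 2) ^ N" for N
  proof (cases "N = 0")
    case True
    then have "avoiders p k N \<subseteq> {{}}" by (auto simp: avoiders_def)
    then show ?thesis using card_mono[of "{{}}"] True by simp
  next
    case False
    then obtain m where m: "N \<le> 2 ^ m" "2 ^ m \<le> 2 * N"
      using exists_power_between[of 2 N] by auto
    have "card (avoiders p k N) \<le> card (avoiders p k (2 ^ m))"
      using m(1) by (intro card_mono finite_avoiders avoiders_mono)
    also have "\<dots> \<le> D ^ 2 ^ m" by (rule dyadic)
    also have "\<dots> \<le> D ^ (2 * N)" by (rule power_increasing[OF m(2) D])
    finally show ?thesis by (simp add: power_mult)
  qed
  moreover have "1 \<le> D ^ 2" using D by simp
  ultimately show ?thesis by blast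
qed


definition list_graph :: "nat list \<Rightarrow> (nat \<times> nat) set" where
  "list_graph \<sigma> = {(i, \<sigma> ! i) | i. i < length \<sigma>}"

definition pattern_perm :: "nat list \<Rightarrow> nat \<Rightarrow> nat" where
  "pattern_perm \<pi> i = (if i < length \<pi> then \<pi> ! i - 1 else i)"

lemma pattern_perm_nth:
  assumes "set \<pi> = {1..length \<pi>}" "i < length \<pi>"
  shows "\<pi> ! i = Suc (pattern_perm \<pi> i)" "pattern_perm \<pi> i < length \<pi>"
proof -
  have "\<pi> ! i \<in> {1..length \<pi>}" using assms nth_mem by metis
  then show "\<pi> ! i = Suc (pattern_perm \<pi> i)" "pattern_perm \<pi> i < length \<pi>"
    using assms(2) by (auto simp: pattern_perm_def)
qed

lemma pattern_perm_permutes: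
  assumes "distinct \<pi>" "set \<pi> = {1..length \<pi>}"
  shows "pattern_perm \<pi> permutes {..<length \<pi>}"
proof (rule bij_imp_permutes)
  have inj: "inj_on (pattern_perm \<pi>) {..<length \<pi>}"
  proof (rule inj_onI)
    fix i j assume "i \<in> {..<length \<pi>}" "j \<in> {..<length \<pi>}" "pattern_perm \<pi> i = pattern_perm \<pi> j"
    then have "\<pi> ! i = \<pi> ! j" using pattern_perm_nth(1)[OF assms(2)] by simp
    then show "i = j" using assms(1) \<open>i \<in> _\<close> \<open>j \<in> _\<close> by (simp add: nth_eq_iff_index_eq)
  qed
  moreover have "pattern_perm \<pi> ` {..<length \<pi>} \<subseteq> {..<length \<pi>}"
    using pattern_perm_nth(2)[OF assms(2)] by auto
  ultimately show "bij_betw (pattern_perm \<pi>) {..<length \<pi>} {..<length \<pi>}"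
    by (simp add: bij_betw_def endo_inj_surj)
qed (simp add: pattern_perm_def)

lemma contains_if_contains_pattern_list_graph:
  assumes set_\<pi>: "set \<pi> = {1..length \<pi>}"
    and "contains_pattern (pattern_perm \<pi>) (length \<pi>) (list_graph \<sigma>)"
  shows "contains \<sigma> \<pi>"
proof -
  let ?k = "length \<pi>" and ?p = "pattern_perm \<pi>"
  obtain x y where x: "strict_mono_on {..<?k} x" and y: "strict_mono_on {..<?k} y"
    and xy: "\<forall>i<?k. (x i, y (?p i)) \<in> list_graph \<sigma>"
    using assms(2) unfolding contains_pattern_def by blast
  have x_less: "x i < length \<sigma>" and \<sigma>_x: "\<sigma> ! x i = y (?p i)" if "i < ?k" for i
    using xy that unfolding list_graph_def by auto
  define "is" where "is = map x [0..<?k]"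
  have "sorted_wrt (<) is"
    unfolding is_def sorted_wrt_map using strict_mono_onD[OF x] by (auto simp: sorted_wrt_iff_nth_less)
  moreover have "\<forall>j\<in>set is. j < length \<sigma>" unfolding is_def using x_less by auto
  moreover have "(\<sigma> ! (is ! a) < \<sigma> ! (is ! b) \<longleftrightarrow> \<pi> ! a < \<pi> ! b) \<and>
      (\<sigma> ! (is ! a) = \<sigma> ! (is ! b) \<longleftrightarrow> \<pi> ! a = \<pi> ! b)" if "a < ?k" "b < ?k" for a b
    using that \<sigma>_x pattern_perm_nth[OF set_\<pi>]
      strict_mono_on_less[OF y, of "?p a" "?p b"] strict_mono_on_eq[OF y, of "?p a" "?p b"]
    by (simp add: is_def)
  ultimately show ?thesis unfolding contains_def by (intro exI[of _ "is"]) (simp add: is_def)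
qed

lemma w_count_le_card_avoiders:
  assumes "distinct \<pi>" "set \<pi> = {1..length \<pi>}" "n \<le> l"
  shows "w_count l n \<pi> \<le> card (avoiders (pattern_perm \<pi>) (length \<pi>) (Suc l))"
proof -
  define W where "W = {\<sigma>. length \<sigma> = l \<and> set \<sigma> \<subseteq> {1..n} \<and> avoids \<sigma> \<pi>}"
  have "list_graph ` W \<subseteq> avoiders (pattern_perm \<pi>) (length \<pi>) (Suc l)"
  proof
    fix P assume "P \<in> list_graph ` W"
    then obtain \<sigma> where \<sigma>: "\<sigma> \<in> W" "P = list_graph \<sigma>" by blast
    have "\<sigma> ! i \<le> l" if "i < length \<sigma>" for i
    proof -
      have "\<sigma> ! i \<in> {1..n}" using \<sigma>(1) nth_mem[OF that] by (auto simp: W_def)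
      then show ?thesis using assms(3) by simp
    qed
    then have "list_graph \<sigma> \<subseteq> {..<Suc l} \<times> {..<Suc l}"
      using \<sigma>(1) by (auto simp: list_graph_def W_def less_Suc_eq_le)
    moreover have "\<not> contains_pattern (pattern_perm \<pi>) (length \<pi>) (list_graph \<sigma>)"
      using \<sigma>(1) contains_if_contains_pattern_list_graph[OF assms(2)] by (auto simp: W_def avoids_def)
    ultimately show "P \<in> avoiders (pattern_perm \<pi>) (length \<pi>) (Suc l)"
      using \<sigma>(2) by (simp add: avoiders_def)
  qed
  moreover have "inj_on list_graph W"
  proof (rule inj_onI)
    fix s t assume st: "s \<in> W" "t \<in> W" "list_graph s = list_graph t"
    have "length s = length t" using st by (simp add: W_def)
    moreover have "s ! i = t ! i" if "i < length s" for i
    proof -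
      have "(i, s ! i) \<in> list_graph t" using st(3) that by (auto simp: list_graph_def)
      then show ?thesis by (auto simp: list_graph_def)
    qed
    ultimately show "s = t" by (simp add: nth_equalityI)
  qed
  ultimately have "card W \<le> card (avoiders (pattern_perm \<pi>) (length \<pi>) (Suc l))"
    by (metis card_inj_on_le finite_avoiders)
  then show ?thesis unfolding w_count_def W_def .
qed

lemma s_count_le_w_count:
  assumes "(\<Sum>i=1..n. \<mu> i) = l"
  shows "s_count n \<mu> \<pi> \<le> w_count l n \<pi>"
proof -
  have "{\<sigma> \<in> multiset_perms n \<mu>. avoids \<sigma> \<pi>} \<subseteq> {\<sigma>. length \<sigma> = l \<and> set \<sigma> \<subseteq> {1..n} \<and> avoids \<sigma> \<pi>}"
  proof
    fix \<sigma> assume \<sigma>: "\<sigma> \<in> {\<sigma> \<in> multiset_perms n \<mu>. avoids \<sigma> \<pi>}"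
    then have set_\<sigma>: "set \<sigma> \<subseteq> {1..n}" and "\<forall>i\<in>{1..n}. count_list \<sigma> i = \<mu> i"
      by (auto simp: multiset_perms_def)
    then have "length \<sigma> = l" using sum_count_set[OF set_\<sigma>] assms by simp
    then show "\<sigma> \<in> {\<sigma>. length \<sigma> = l \<and> set \<sigma> \<subseteq> {1..n} \<and> avoids \<sigma> \<pi>}" using \<sigma> set_\<sigma> by simp
  qed
  moreover have "finite {\<sigma>. length \<sigma> = l \<and> set \<sigma> \<subseteq> {1..n} \<and> avoids \<sigma> \<pi>}"
    by (rule finite_subset[OF _ finite_lists_length_eq[of "{1..n}" l]]) auto
  ultimately show ?thesis unfolding s_count_def w_count_def by (rule card_mono[rotated])
qed

lemma w_count_exponential:
  assumes "distinct \<pi>" "set \<pi> = {1..length \<pi>}"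
  shows "\<exists>e. \<forall>n l. 1 \<le> n \<longrightarrow> n \<le> l \<longrightarrow> w_count l n \<pi> \<le> e ^ l"
proof -
  obtain E :: nat where "1 \<le> E" and E: "\<forall>N. card (avoiders (pattern_perm \<pi>) (length \<pi>) N) \<le> E ^ N"
    using card_avoiders_exponential[OF pattern_perm_permutes[OF assms]] by blast
  have "w_count l n \<pi> \<le> (E ^ 2) ^ l" if "1 \<le> n" "n \<le> l" for n l
  proof -
    have "w_count l n \<pi> \<le> E ^ Suc l"
      using w_count_le_card_avoiders[OF assms \<open>n \<le> l\<close>] E le_trans by blast
    also have "\<dots> \<le> E ^ (2 * l)" using \<open>1 \<le> E\<close> that by (intro power_increasing) auto
    finally show ?thesis by (simp add: power_mult)
  qed
  then show ?thesis by blast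
qed

theorem corollary9:
  fixes \<pi> :: "nat list" and k :: nat
  assumes "distinct \<pi>" and "set \<pi> = {1..k}"
  shows "\<exists>e :: real. \<forall>n l. 1 \<le> n \<longrightarrow> n \<le> l \<longrightarrow>
           (\<forall>\<mu> :: nat \<Rightarrow> nat. (\<forall>i\<in>{1..n}. \<mu> i > 0) \<longrightarrow> (\<Sum>i=1..n. \<mu> i) = l \<longrightarrow>
              real (s_count n \<mu> \<pi>) \<le> e ^ l) \<and>
           real (w_count l n \<pi>) \<le> e ^ l"
proof -
  have "set \<pi> = {1..length \<pi>}" using distinct_card[OF assms(1)] assms(2) by simp
  then obtain e :: nat where w_count: "\<And>n l. 1 \<le> n \<Longrightarrow> n \<le> l \<Longrightarrow> w_count l n \<pi> \<le> e ^ l"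
    using w_count_exponential[OF assms(1)] by blast
  have "s_count n \<mu> \<pi> \<le> e ^ l" if "1 \<le> n" "n \<le> l" "(\<Sum>i=1..n. \<mu> i) = l" for n l \<mu>
    using s_count_le_w_count[OF that(3)] w_count[OF that(1,2)] by (rule le_trans)
  then show ?thesis
    using w_count by (intro exI[of _ "real e"]) (simp del: of_nat_power add: of_nat_power[symmetric])
qed

end
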